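(* Let $L$ be any infinite regular language over an alphabet $\Sigma$ with $|\Sigma|\geq 2$. Then there exists a positive integer $m$ such that the following holds: for any integer $n\geq 1$ and any subset $S\subseteq L\cap\Sigma^n$ with $|S|>m$, and for any integer $i\in\{0,1,\ldots,n\}$, there exist two strings $x=x_1x_2$ and $y=y_1y_2$ in $S$ with $|x_1|=|y_1|=i$ and $|x_2|=|y_2|$ such that (i) $x\neq y$, (ii) $y_1x_2\in L$, and (iii) $x_1y_2\in L$.
   Context: $\Sigma^n$ denotes the set of all strings of length exactly $n$ over $\Sigma$; $|w|$ denotes the length of a string $w$. *)

theory Defs
  imports Main
begin

text \<open>States are encoded as natural numbers (any finite state set can be so encoded).\<close>

definition dfa_run :: "(nat \<Rightarrow> 'a \<Rightarrow> nat) \<Rightarrow> nat \<Rightarrow> 'a list \<Rightarrow> nat" where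
  "dfa_run \<delta> q w = fold (\<lambda>a s. \<delta> s a) w q"

definition regular_on :: "'a set \<Rightarrow> 'a list set \<Rightarrow> bool" where
  "regular_on \<Sigma> L \<longleftrightarrow>
     (\<exists>(Q::nat set) q0 \<delta> F. finite Q \<and> q0 \<in> Q \<and> F \<subseteq> Q \<and>
        (\<forall>q\<in>Q. \<forall>a\<in>\<Sigma>. \<delta> q a \<in> Q) \<and>
        L = {w \<in> lists \<Sigma>. dfa_run \<delta> q0 w \<in> F})"

end

theory Submission
  imports Defs
begin

text \<open>Take for m the number of states of a DFA for L. Among more than m words of S,
  two words x \<noteq> y reach the same state after reading their first i letters; since
  acceptance of a word depends only on that state and the remaining suffix, the prefixes
  of x and y can be exchanged.\<close>

lemma dfa_run_append: "dfa_run \<delta> q (u @ v) = dfa_run \<delta> (dfa_run \<delta> q u) v"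
  by (simp add: dfa_run_def)

lemma dfa_run_in_states:
  assumes "q \<in> Q" and "\<forall>q\<in>Q. \<forall>a\<in>\<Sigma>. \<delta> q a \<in> Q" and "w \<in> lists \<Sigma>"
  shows "dfa_run \<delta> q w \<in> Q"
  using assms by (induction w arbitrary: q) (auto simp: dfa_run_def)

lemma dfa_language_exchange_prefix:
  assumes L: "L = {w \<in> lists \<Sigma>. dfa_run \<delta> q0 w \<in> F}"
    and "x \<in> L" and "y \<in> L"
    and same_state: "dfa_run \<delta> q0 (take i x) = dfa_run \<delta> q0 (take i y)"
  shows "take i y @ drop i x \<in> L"
proof -
  have "dfa_run \<delta> q0 (take i y @ drop i x) = dfa_run \<delta> q0 x"
    using same_state by (metis append_take_drop_id dfa_run_append)
  moreover have "take i y @ drop i x \<in> lists \<Sigma>"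
    using assms(2,3) unfolding L by (auto dest: in_set_takeD in_set_dropD)
  ultimately show ?thesis
    using assms(2) unfolding L by simp
qed

lemma pigeonhole_collision:
  assumes "f ` S \<subseteq> Q" and "finite Q" and "card Q < card S"
  obtains x y where "x \<in> S" "y \<in> S" "x \<noteq> y" "f x = f y"
proof -
  have "card (f ` S) < card S"
    using assms card_mono le_less_trans by blast
  hence "\<not> inj_on f S"
    using card_image by fastforce
  thus ?thesis
    using that unfolding inj_on_def by blast
qed

lemma dfa_language_exchangeable_pair:
  assumes Q: "finite Q" "q0 \<in> Q" and closed: "\<forall>q\<in>Q. \<forall>a\<in>\<Sigma>. \<delta> q a \<in> Q"
    and L: "L = {w \<in> lists \<Sigma>. dfa_run \<delta> q0 w \<in> F}"
    and S: "S \<subseteq> L" and card_S: "card S > card Q"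
  shows "\<exists>x\<in>S. \<exists>y\<in>S. x \<noteq> y \<and> take i y @ drop i x \<in> L \<and> take i x @ drop i y \<in> L"
proof -
  have "(\<lambda>w. dfa_run \<delta> q0 (take i w)) ` S \<subseteq> Q"
  proof (rule image_subsetI)
    fix w assume "w \<in> S"
    hence "take i w \<in> lists \<Sigma>"
      using S unfolding L by (auto dest: in_set_takeD)
    thus "dfa_run \<delta> q0 (take i w) \<in> Q"
      by (rule dfa_run_in_states[OF Q(2) closed])
  qed
  then obtain x y where xy: "x \<in> S" "y \<in> S" "x \<noteq> y"
    and same_state: "dfa_run \<delta> q0 (take i x) = dfa_run \<delta> q0 (take i y)"
    using pigeonhole_collision[OF _ Q(1) card_S] by blast
  have "x \<in> L" "y \<in> L"
    using xy S by auto
  hence "take i y @ drop i x \<in> L" "take i x @ drop i y \<in> L"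
    using dfa_language_exchange_prefix[OF L] same_state by auto
  with xy show ?thesis
    by blast
qed

theorem lemma3p1:
  fixes \<Sigma> :: "'a set" and L :: "'a list set"
  assumes "finite \<Sigma>" and "card \<Sigma> \<ge> 2"
    and "regular_on \<Sigma> L" and "infinite L"
  shows "\<exists>m::nat. m > 0 \<and>
    (\<forall>(n::nat) S (i::nat). n \<ge> 1 \<longrightarrow> S \<subseteq> L \<inter> {w \<in> lists \<Sigma>. length w = n} \<longrightarrow>
       card S > m \<longrightarrow> i \<le> n \<longrightarrow>
       (\<exists>x\<in>S. \<exists>y\<in>S. x \<noteq> y \<and>
          take i y @ drop i x \<in> L \<and> take i x @ drop i y \<in> L))"
proof -
  obtain Q :: "nat set" and q0 \<delta> F where Q: "finite Q" "q0 \<in> Q"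
    and closed: "\<forall>q\<in>Q. \<forall>a\<in>\<Sigma>. \<delta> q a \<in> Q"
    and L: "L = {w \<in> lists \<Sigma>. dfa_run \<delta> q0 w \<in> F}"
    using assms(3) unfolding regular_on_def by blast
  show ?thesis
  proof (intro exI[of _ "card Q"] conjI allI impI)
    show "card Q > 0"
      using Q by (auto simp: card_gt_0_iff)
    fix n S i
    assume "S \<subseteq> L \<inter> {w \<in> lists \<Sigma>. length w = n}" and "card Q < card S"
    thus "\<exists>x\<in>S. \<exists>y\<in>S. x \<noteq> y \<and> take i y @ drop i x \<in> L \<and> take i x @ drop i y \<in> L"
      using dfa_language_exchangeable_pair[OF Q closed L] by simp
  qed
qed

end
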